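(* Let $n\in\mathbb N$, let $c_i=B(f^{(i)})$, $i=1,\dots,n$, be fermions in $\mathcal A_n$ (i.e. $\{c_i,c_j\}=0$, $\{c_i^*,c_j\}=\delta_{ij}$), and define $e^{(i)}_{11}=c_i^*c_i$, $e^{(i)}_{12}=c_i^*$, $e^{(i)}_{21}=c_i$, $e^{(i)}_{22}=c_ic_i^*$. Then the $2^{2n}$ operators $\prod_{i=1}^ne^{(i)}_{\alpha_i\beta_i}$, $\alpha_1,\beta_1,\dots,\alpha_n,\beta_n\in\{1,2\}$, form an orthonormal basis of $\mathcal A_n$ equipped with the scalar product $(A,B)\mapsto\operatorname{tr}(A^*B)$.
   Context: $\mathcal A_n$ is the CAR algebra generated by $b_1,\dots,b_n$ ($\{b_x,b_y\}=0$, $\{b_x^*,b_y\}=\delta_{xy}$), identified with the algebra of all linear operators on the $2^n$-dimensional Fock space $\mathfrak F(\mathbb C^n)$; $\operatorname{tr}$ is the trace on $\mathfrak F(\mathbb C^n)$. For $f=(f_+,f_-)\in\mathbb C^n\oplus\mathbb C^n$, $B(f)=\sum_{x=1}^n(f_+(x)b_x^*+f_-(x)b_x)$. Products $\prod_{i=1}^n$ are ordered with $i=1$ leftmost. *)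

theory Defs
  imports Complex_Main "HOL-Library.FuncSet"
begin

(* Fock space F(C^n): orthonormal basis |S>, S a subset of {1..n} (occupied modes).
   An operator is given by its matrix entries  A S T = <S|A|T>;  the algebra A_n
   consists of the operators whose entries vanish outside Pow {1..n} x Pow {1..n}. *)

type_synonym op = "nat set \<Rightarrow> nat set \<Rightarrow> complex"

definition is_op :: "nat \<Rightarrow> op \<Rightarrow> bool" where
  "is_op n A \<longleftrightarrow> (\<forall>S T. A S T \<noteq> 0 \<longrightarrow> S \<subseteq> {1..n} \<and> T \<subseteq> {1..n})"

definition op_mult :: "nat \<Rightarrow> op \<Rightarrow> op \<Rightarrow> op" where
  "op_mult n A B = (\<lambda>S T. \<Sum>U\<in>Pow {1..n}. A S U * B U T)"

definition op_adj :: "op \<Rightarrow> op" where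
  "op_adj A = (\<lambda>S T. cnj (A T S))"

definition op_id :: "nat \<Rightarrow> op" where
  "op_id n = (\<lambda>S T. if S = T \<and> S \<subseteq> {1..n} then 1 else 0)"

definition op_zero :: op where
  "op_zero = (\<lambda>S T. 0)"

definition anticomm :: "nat \<Rightarrow> op \<Rightarrow> op \<Rightarrow> op" where
  "anticomm n A B = (\<lambda>S T. op_mult n A B S T + op_mult n B A S T)"

definition tr :: "nat \<Rightarrow> op \<Rightarrow> complex" where
  "tr n A = (\<Sum>S\<in>Pow {1..n}. A S S)"

(* annihilation operator b_x (Jordan-Wigner sign convention):
   b_x |T> = (-1)^{#{y in T. y < x}} |T - {x}>  if x in T, and 0 otherwise *)
definition ann :: "nat \<Rightarrow> nat \<Rightarrow> op" where
  "ann n x = (\<lambda>S T. if T \<subseteq> {1..n} \<and> x \<in> T \<and> S = T - {x}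
                     then (-1) ^ card {y\<in>T. y < x} else 0)"

definition Bf :: "nat \<Rightarrow> (nat \<Rightarrow> complex) \<times> (nat \<Rightarrow> complex) \<Rightarrow> op" where
  "Bf n f = (\<lambda>S T. \<Sum>x\<in>{1..n}. fst f x * op_adj (ann n x) S T + snd f x * ann n x S T)"

definition e_unit :: "nat \<Rightarrow> op \<Rightarrow> nat \<Rightarrow> nat \<Rightarrow> op" where
  "e_unit n c a b =
     (if a = 1 \<and> b = 1 then op_mult n (op_adj c) c
      else if a = 1 \<and> b = 2 then op_adj c
      else if a = 2 \<and> b = 1 then c
      else op_mult n c (op_adj c))"

fun op_prod :: "nat \<Rightarrow> (nat \<Rightarrow> op) \<Rightarrow> nat \<Rightarrow> op" where
  "op_prod n F 0 = op_id n"
| "op_prod n F (Suc k) = op_mult n (op_prod n F k) (F (Suc k))"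

end

theory Submission
  imports Defs "HOL-Library.Function_Algebras" "Jordan_Normal_Form.Determinant"
begin

(* The CAR relations of a single mode, c_i^2 = 0 and c_i^* c_i + c_i c_i^* = 1, make the e^(i)_ab
   a system of 2x2 matrix units: e_ab e_a'b' = delta_ba' e_ab'. Diagonal units are products of two
   generators of mode i, which anticommute with the generators of any other mode, so they commute
   with all units of the other modes. Multiplying P_(alpha,beta) on the left (right) by e^(j)_aa
   therefore keeps it or kills it according to whether a = alpha_j (a = beta_j); this gives
   tr(P_p^* P_q) = 0 for p <> q. For p = q, P_p^* P_p is the product of the diagonal units
   e^(i)_(beta_i beta_i), and each factor halves the trace, because e_22 = e_21 e_11 e_12 has the
   same trace as e_11 against anything commuting with e_21. Finally, 4^n orthonormal operators in
   the 4^n-dimensional algebra are complete: their coefficient matrix V satisfies V V^* = 1,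
   hence V^* V = 1. *)

section \<open>Operators on the Fock space\<close>

lemma op_zero_eq_0 [simp]: "op_zero = 0"
  by (auto simp: op_zero_def intro!: ext)

lemma anticomm_eq: "anticomm n A B = op_mult n A B + op_mult n B A"
  by (auto simp: anticomm_def intro!: ext)

lemma op_mult_assoc: "op_mult n (op_mult n A B) C = op_mult n A (op_mult n B C)"
  unfolding op_mult_def
  by (auto simp: sum_distrib_left sum_distrib_right mult.assoc intro!: ext sum.swap[THEN trans])

lemma op_mult_0_left [simp]: "op_mult n 0 A = 0"
  by (auto simp: op_mult_def intro!: ext)

lemma op_mult_0_right [simp]: "op_mult n A 0 = 0"
  by (auto simp: op_mult_def intro!: ext)

lemma op_mult_add_right: "op_mult n A (B + C) = op_mult n A B + op_mult n A C"
  by (auto simp: op_mult_def sum.distrib distrib_left intro!: ext)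

lemma op_mult_diff_left: "op_mult n (A - B) C = op_mult n A C - op_mult n B C"
  by (auto simp: op_mult_def sum_subtractf left_diff_distrib intro!: ext)

lemma op_mult_diff_right: "op_mult n A (B - C) = op_mult n A B - op_mult n A C"
  by (auto simp: op_mult_def sum_subtractf right_diff_distrib intro!: ext)

lemma op_mult_minus_left: "op_mult n (- A) B = - op_mult n A B"
  by (auto simp: op_mult_def sum_negf intro!: ext)

lemma op_mult_minus_right: "op_mult n A (- B) = - op_mult n A B"
  by (auto simp: op_mult_def sum_negf intro!: ext)

lemma op_mult_id_left:
  assumes "is_op n A"
  shows "op_mult n (op_id n) A = A"
proof (intro ext)
  fix S T
  have "op_mult n (op_id n) A S T = (\<Sum>U\<in>Pow {1..n}. if U = S then A S T else 0)"
    unfolding op_mult_def op_id_def by (rule sum.cong) auto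
  also have "\<dots> = A S T"
    using assms by (auto simp: is_op_def)
  finally show "op_mult n (op_id n) A S T = A S T" .
qed

lemma op_mult_id_right:
  assumes "is_op n A"
  shows "op_mult n A (op_id n) = A"
proof (intro ext)
  fix S T
  have "op_mult n A (op_id n) S T = (\<Sum>U\<in>Pow {1..n}. if U = T then A S T else 0)"
    unfolding op_mult_def op_id_def by (rule sum.cong) auto
  also have "\<dots> = A S T"
    using assms by (auto simp: is_op_def)
  finally show "op_mult n A (op_id n) S T = A S T" .
qed

lemma op_adj_adj [simp]: "op_adj (op_adj A) = A"
  by (simp add: op_adj_def)

lemma op_adj_0 [simp]: "op_adj 0 = 0"
  by (auto simp: op_adj_def intro!: ext)

lemma op_adj_minus: "op_adj (- A) = - op_adj A"
  by (auto simp: op_adj_def intro!: ext)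

lemma op_adj_id [simp]: "op_adj (op_id n) = op_id n"
  by (auto simp: op_adj_def op_id_def intro!: ext)

lemma op_adj_mult: "op_adj (op_mult n A B) = op_mult n (op_adj B) (op_adj A)"
  by (auto simp: op_mult_def op_adj_def mult.commute intro!: ext)

lemma is_op_mult: "is_op n A \<Longrightarrow> is_op n B \<Longrightarrow> is_op n (op_mult n A B)"
  unfolding is_op_def op_mult_def by (metis (no_types, lifting) mult_not_zero sum.neutral)

lemma is_op_adj: "is_op n A \<Longrightarrow> is_op n (op_adj A)"
  by (auto simp: is_op_def op_adj_def)

lemma is_op_id: "is_op n (op_id n)"
  by (simp add: is_op_def op_id_def)

lemma is_op_ann: "is_op n (ann n x)"
  by (auto simp: is_op_def ann_def)

lemma is_op_Bf: "is_op n (Bf n f)"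
  using is_op_ann is_op_adj[OF is_op_ann]
  unfolding is_op_def Bf_def by (metis (no_types, lifting) add.right_neutral mult_zero_right sum.neutral)

lemma tr_add: "tr n (A + B) = tr n A + tr n B"
  by (simp add: tr_def sum.distrib)

lemma tr_id: "tr n (op_id n) = 2 ^ n"
  by (simp add: tr_def op_id_def card_Pow)

lemma tr_op_mult_commute: "tr n (op_mult n A B) = tr n (op_mult n B A)"
  unfolding tr_def op_mult_def by (rule sum.swap[THEN trans]) (simp add: mult.commute)

lemma tr_0 [simp]: "tr n 0 = 0"
  by (simp add: tr_def)

lemma tr_adj_mult_eq_sum:
  "tr n (op_mult n (op_adj A) B) =
    (\<Sum>x\<in>Pow {1..n} \<times> Pow {1..n}. cnj (A (fst x) (snd x)) * B (fst x) (snd x))"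
  unfolding tr_def op_mult_def op_adj_def
  by (subst sum.swap) (simp add: sum.cartesian_product split_beta)

lemma op_mult_anticommute: "anticomm n A B = 0 \<Longrightarrow> op_mult n A B = - op_mult n B A"
  by (simp add: anticomm_eq eq_neg_iff_add_eq_0)

definition op_commute :: "nat \<Rightarrow> op \<Rightarrow> op \<Rightarrow> bool" where
  "op_commute n A B \<longleftrightarrow> op_mult n A B = op_mult n B A"

lemma op_commute_sym: "op_commute n A B \<Longrightarrow> op_commute n B A"
  by (simp add: op_commute_def)

lemma op_commute_id: "is_op n A \<Longrightarrow> op_commute n A (op_id n)"
  by (simp add: op_commute_def op_mult_id_left op_mult_id_right)

lemma op_commute_mult_left:
  "op_commute n A C \<Longrightarrow> op_commute n B C \<Longrightarrow> op_commute n (op_mult n A B) C"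
  unfolding op_commute_def by (metis op_mult_assoc)

lemma op_commute_mult_right:
  "op_commute n A B \<Longrightarrow> op_commute n A C \<Longrightarrow> op_commute n A (op_mult n B C)"
  unfolding op_commute_def by (metis op_mult_assoc)

section \<open>Complete orthonormal families\<close>

lemma orthonormal_square_complete:
  fixes Q :: "'p \<Rightarrow> 'x \<Rightarrow> complex"
  assumes "finite I" "finite X" "card I = card X"
    and orthonormal: "\<And>p q. p \<in> I \<Longrightarrow> q \<in> I \<Longrightarrow>
      (\<Sum>x\<in>X. cnj (Q p x) * Q q x) = (if p = q then 1 else 0)"
    and "x \<in> X" "y \<in> X"
  shows "(\<Sum>p\<in>I. cnj (Q p x) * Q p y) = (if x = y then 1 else 0)"
proof -
  define N where "N = card X"
  obtain g where g: "bij_betw g {..<N} I"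
    using ex_bij_betw_nat_finite[OF assms(1)] assms(3) by (auto simp: N_def atLeast0LessThan)
  obtain h where h: "bij_betw h {..<N} X"
    using ex_bij_betw_nat_finite[OF assms(2)] by (auto simp: N_def atLeast0LessThan)
  define V where "V = mat N N (\<lambda>(i, j). Q (g i) (h j))"
  define W where "W = mat N N (\<lambda>(i, j). cnj (Q (g j) (h i)))"
  have "V * W = 1\<^sub>m N"
  proof (rule eq_matI)
    fix i k
    assume "i < dim_row (1\<^sub>m N)" "k < dim_col (1\<^sub>m N)"
    then have ik: "i < N" "k < N"
      by auto
    have "(V * W) $$ (i, k) = (\<Sum>j<N. cnj (Q (g k) (h j)) * Q (g i) (h j))"
      using ik by (simp add: V_def W_def scalar_prod_def atLeast0LessThan mult.commute)
    also have "\<dots> = (\<Sum>x\<in>X. cnj (Q (g k) x) * Q (g i) x)"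
      by (rule sum.reindex_bij_betw[OF h])
    also have "\<dots> = 1\<^sub>m N $$ (i, k)"
      using ik g orthonormal by (auto simp: bij_betw_def inj_on_def)
    finally show "(V * W) $$ (i, k) = 1\<^sub>m N $$ (i, k)" .
  qed (simp_all add: V_def W_def)
  then have WV: "W * V = 1\<^sub>m N"
    by (rule mat_mult_left_right_inverse[rotated 2]) (simp_all add: V_def W_def)
  obtain j l where jl: "j < N" "l < N" "x = h j" "y = h l"
    using h \<open>x \<in> X\<close> \<open>y \<in> X\<close> by (metis bij_betw_imp_surj_on imageE lessThan_iff)
  have "(\<Sum>p\<in>I. cnj (Q p x) * Q p y) = (\<Sum>i<N. cnj (Q (g i) x) * Q (g i) y)"
    by (rule sum.reindex_bij_betw[OF g, symmetric])
  also have "\<dots> = (W * V) $$ (j, l)"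
    using jl by (simp add: V_def W_def scalar_prod_def atLeast0LessThan)
  also have "\<dots> = (if x = y then 1 else 0)"
    using WV jl h by (auto simp: bij_betw_def inj_on_def)
  finally show ?thesis .
qed

lemma orthonormal_op_expansion:
  fixes P :: "'p \<Rightarrow> op"
  assumes "finite I" "card I = card (Pow {1..n} \<times> Pow {1..n})"
    and is_op_P: "\<And>p. p \<in> I \<Longrightarrow> is_op n (P p)"
    and orthonormal: "\<And>p q. p \<in> I \<Longrightarrow> q \<in> I \<Longrightarrow>
      tr n (op_mult n (op_adj (P p)) (P q)) = (if p = q then 1 else 0)"
    and "is_op n A"
  shows "A = (\<lambda>S T. \<Sum>p\<in>I. tr n (op_mult n (op_adj (P p)) A) * P p S T)"
proof (intro ext)
  fix S T
  let ?X = "Pow {1..n} \<times> Pow {1..n}"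
  have orthonormal_entries:
    "(\<Sum>x\<in>?X. cnj (P p (fst x) (snd x)) * P q (fst x) (snd x)) = (if p = q then 1 else 0)"
    if "p \<in> I" "q \<in> I" for p q
    using orthonormal[OF that] by (simp only: tr_adj_mult_eq_sum)
  have complete:
    "(\<Sum>p\<in>I. cnj (P p (fst x) (snd x)) * P p (fst y) (snd y)) = (if x = y then 1 else 0)"
    if "x \<in> ?X" "y \<in> ?X" for x y
    using orthonormal_square_complete[where Q = "\<lambda>p x. P p (fst x) (snd x)",
        OF assms(1) _ assms(2) orthonormal_entries that]
    by simp
  show "A S T = (\<Sum>p\<in>I. tr n (op_mult n (op_adj (P p)) A) * P p S T)"
  proof (cases "(S, T) \<in> ?X")
    case True
    have "(\<Sum>p\<in>I. tr n (op_mult n (op_adj (P p)) A) * P p S T) =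
        (\<Sum>x\<in>?X. A (fst x) (snd x) * (\<Sum>p\<in>I. cnj (P p (fst x) (snd x)) * P p S T))"
      by (simp add: tr_adj_mult_eq_sum sum_distrib_left sum_distrib_right mult_ac sum.swap[of _ I])
    also have "\<dots> = (\<Sum>x\<in>?X. if x = (S, T) then A S T else 0)"
      using complete[OF _ True] by (intro sum.cong) auto
    also have "\<dots> = A S T"
      using True by simp
    finally show ?thesis
      by simp
  next
    case False
    then have "\<not> (S \<subseteq> {1..n} \<and> T \<subseteq> {1..n})"
      by simp
    then have "A S T = 0" "\<And>p. p \<in> I \<Longrightarrow> P p S T = 0"
      using assms(5) is_op_P unfolding is_op_def by blast+
    then show ?thesis
      by simp
  qed
qed

section \<open>Matrix units of a CAR family\<close>

lemma e_unit_adj: "a \<in> {1,2} \<Longrightarrow> b \<in> {1,2} \<Longrightarrow> op_adj (e_unit n C a b) = e_unit n C b a"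
  by (elim insertE emptyE) (simp_all add: e_unit_def op_adj_mult)

lemma e_unit_generator_or_product:
  "e_unit n C a b \<in> {C, op_adj C} \<or>
   (\<exists>x\<in>{C, op_adj C}. \<exists>y\<in>{C, op_adj C}. e_unit n C a b = op_mult n x y)"
  by (auto simp: e_unit_def)

lemma e_unit_diag_product: "\<exists>x\<in>{C, op_adj C}. \<exists>y\<in>{C, op_adj C}. e_unit n C a a = op_mult n x y"
  by (auto simp: e_unit_def)

locale car_family =
  fixes n :: nat and c :: "nat \<Rightarrow> op"
  assumes is_op_c: "i \<in> {1..n} \<Longrightarrow> is_op n (c i)"
    and anticomm_c_c: "i \<in> {1..n} \<Longrightarrow> j \<in> {1..n} \<Longrightarrow> anticomm n (c i) (c j) = 0"
    and anticomm_adj_c_c: "i \<in> {1..n} \<Longrightarrow> j \<in> {1..n} \<Longrightarrow>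
      anticomm n (op_adj (c i)) (c j) = (if i = j then op_id n else 0)"
begin

abbreviation e :: "nat \<Rightarrow> nat \<Rightarrow> nat \<Rightarrow> op" where
  "e i a b \<equiv> e_unit n (c i) a b"

lemma c_mult_c:
  assumes "i \<in> {1..n}"
  shows "op_mult n (c i) (c i) = 0"
proof (intro ext)
  fix S T
  have "op_mult n (c i) (c i) S T + op_mult n (c i) (c i) S T = 0"
    using anticomm_c_c[OF assms assms] by (metis anticomm_eq plus_fun_apply zero_fun_apply)
  then show "op_mult n (c i) (c i) S T = 0 S T"
    by simp
qed

lemma adj_c_mult_adj_c: "i \<in> {1..n} \<Longrightarrow> op_mult n (op_adj (c i)) (op_adj (c i)) = 0"
  by (metis c_mult_c op_adj_0 op_adj_mult)

lemma c_mult_c_mult: "i \<in> {1..n} \<Longrightarrow> op_mult n (c i) (op_mult n (c i) X) = 0"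
  by (simp add: c_mult_c flip: op_mult_assoc)

lemma adj_c_mult_adj_c_mult:
  "i \<in> {1..n} \<Longrightarrow> op_mult n (op_adj (c i)) (op_mult n (op_adj (c i)) X) = 0"
  by (simp add: adj_c_mult_adj_c flip: op_mult_assoc)

lemma c_mult_adj_c: "i \<in> {1..n} \<Longrightarrow>
  op_mult n (c i) (op_adj (c i)) = op_id n - op_mult n (op_adj (c i)) (c i)"
  using anticomm_adj_c_c[of i i] by (simp add: anticomm_eq eq_diff_eq add.commute)

lemma adj_c_mult_c_mult_adj_c:
  assumes "i \<in> {1..n}"
  shows "op_mult n (op_adj (c i)) (op_mult n (c i) (op_adj (c i))) = op_adj (c i)"
  using assms
  by (simp add: c_mult_adj_c op_mult_diff_right adj_c_mult_adj_c op_mult_id_right is_op_adj is_op_c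
      flip: op_mult_assoc)

lemma c_mult_adj_c_mult_c:
  assumes "i \<in> {1..n}"
  shows "op_mult n (c i) (op_mult n (op_adj (c i)) (c i)) = c i"
  using assms
  by (simp add: op_mult_assoc[symmetric] c_mult_adj_c op_mult_diff_left op_mult_id_left is_op_c
      op_mult_assoc c_mult_c)

lemma e_mult_e:
  assumes "i \<in> {1..n}" "a \<in> {1,2}" "b \<in> {1,2}" "a' \<in> {1,2}" "b' \<in> {1,2}"
  shows "op_mult n (e i a b) (e i a' b') = (if b = a' then e i a b' else 0)"
  using assms
  by (auto simp: e_unit_def op_mult_assoc c_mult_c adj_c_mult_adj_c c_mult_c_mult
      adj_c_mult_adj_c_mult adj_c_mult_c_mult_adj_c c_mult_adj_c_mult_c)

lemma e_11_add_e_22: "i \<in> {1..n} \<Longrightarrow> e i 1 1 + e i 2 2 = op_id n"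
  using anticomm_adj_c_c[of i i] by (simp add: e_unit_def anticomm_eq)

lemma generators_anticommute:
  assumes "i \<in> {1..n}" "j \<in> {1..n}" "i \<noteq> j"
    and "x \<in> {c i, op_adj (c i)}" "y \<in> {c j, op_adj (c j)}"
  shows "op_mult n x y = - op_mult n y x"
proof -
  have c_c: "op_mult n (c k) (c l) = - op_mult n (c l) (c k)" if "k \<in> {1..n}" "l \<in> {1..n}" for k l
    using anticomm_c_c[OF that] by (rule op_mult_anticommute)
  have adj_c_c: "op_mult n (op_adj (c k)) (c l) = - op_mult n (c l) (op_adj (c k))"
    if "k \<in> {1..n}" "l \<in> {1..n}" "k \<noteq> l" for k l
    using anticomm_adj_c_c[OF that(1,2)] that(3) by (simp add: op_mult_anticommute)
  have "op_mult n (op_adj (c i)) (op_adj (c j)) = - op_mult n (op_adj (c j)) (op_adj (c i))"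
    using arg_cong[OF c_c[of j i], of op_adj] assms(1,2) by (simp add: op_adj_mult op_adj_minus)
  then show ?thesis
    using assms c_c adj_c_c by (auto simp: minus_equation_iff)
qed

lemma generator_products_commute:
  assumes "i \<in> {1..n}" "j \<in> {1..n}" "i \<noteq> j"
    and "x \<in> {c i, op_adj (c i)}" "x' \<in> {c i, op_adj (c i)}" "y \<in> {c j, op_adj (c j)}"
  shows "op_commute n (op_mult n x x') y"
proof -
  have "op_mult n (op_mult n x x') y = - op_mult n (op_mult n x y) x'"
    using generators_anticommute[OF assms(1-3,5,6)]
    by (simp add: op_mult_assoc op_mult_minus_right)
  also have "\<dots> = op_mult n y (op_mult n x x')"
    using generators_anticommute[OF assms(1-4,6)]
    by (simp add: op_mult_assoc op_mult_minus_left)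
  finally show ?thesis
    by (simp add: op_commute_def)
qed

lemma e_diag_commute:
  assumes "i \<in> {1..n}" "j \<in> {1..n}" "i \<noteq> j"
  shows "op_commute n (e i a a) (e j a' b')"
proof -
  obtain x x' where x: "x \<in> {c i, op_adj (c i)}" "x' \<in> {c i, op_adj (c i)}"
    and e_eq: "e i a a = op_mult n x x'"
    using e_unit_diag_product by blast
  have "op_commute n (e i a a) y" if "y \<in> {c j, op_adj (c j)}" for y
    unfolding e_eq using generator_products_commute[OF assms x that] .
  then show ?thesis
    using e_unit_generator_or_product[of n "c j" a' b'] by (auto intro!: op_commute_mult_right)
qed

lemma is_op_e: "i \<in> {1..n} \<Longrightarrow> is_op n (e i a b)"
  by (simp add: e_unit_def is_op_c is_op_adj is_op_mult)

section \<open>Products of matrix units\<close>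

definition unit_prod :: "(nat \<Rightarrow> nat) \<Rightarrow> (nat \<Rightarrow> nat) \<Rightarrow> nat \<Rightarrow> op" where
  "unit_prod \<alpha> \<beta> k = op_prod n (\<lambda>i. e i (\<alpha> i) (\<beta> i)) k"

lemma unit_prod_0 [simp]: "unit_prod \<alpha> \<beta> 0 = op_id n"
  by (simp add: unit_prod_def)

lemma unit_prod_Suc [simp]:
  "unit_prod \<alpha> \<beta> (Suc k) = op_mult n (unit_prod \<alpha> \<beta> k) (e (Suc k) (\<alpha> (Suc k)) (\<beta> (Suc k)))"
  by (simp add: unit_prod_def)

lemma is_op_unit_prod: "k \<le> n \<Longrightarrow> is_op n (unit_prod \<alpha> \<beta> k)"
  by (induction k) (auto simp: is_op_id is_op_mult is_op_e)

lemma e_diag_commute_unit_prod: "k < j \<Longrightarrow> j \<le> n \<Longrightarrow> op_commute n (e j a a) (unit_prod \<alpha> \<beta> k)"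
  by (induction k) (auto simp: op_commute_id is_op_e intro!: op_commute_mult_right e_diag_commute)

lemma unit_prod_diag_commute_e: "k < j \<Longrightarrow> j \<le> n \<Longrightarrow> op_commute n (unit_prod \<beta> \<beta> k) (e j a b)"
  by (induction k)
    (auto simp: op_commute_sym op_commute_id is_op_e intro!: op_commute_mult_left e_diag_commute)

lemma e_diag_mult_unit_prod:
  assumes "\<alpha> \<in> {1..n} \<rightarrow> {1,2}" "\<beta> \<in> {1..n} \<rightarrow> {1,2}" "k \<le> n" "j \<in> {1..k}" "a \<in> {1,2}"
  shows "op_mult n (e j a a) (unit_prod \<alpha> \<beta> k) = (if a = \<alpha> j then unit_prod \<alpha> \<beta> k else 0)"
  using assms
proof (induction k)
  case (Suc k)
  show ?case
  proof (cases "j = Suc k")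
    case True
    then have "op_mult n (e j a a) (unit_prod \<alpha> \<beta> (Suc k)) =
        op_mult n (unit_prod \<alpha> \<beta> k) (op_mult n (e j a a) (e j (\<alpha> j) (\<beta> j)))"
      using e_diag_commute_unit_prod[of k j a \<alpha> \<beta>] Suc.prems
      by (simp add: op_commute_def flip: op_mult_assoc)
    moreover have "\<alpha> j \<in> {1,2}" "\<beta> j \<in> {1,2}"
      using Suc.prems by auto
    ultimately show ?thesis
      using e_mult_e[of j a a "\<alpha> j" "\<beta> j"] Suc.prems True by auto
  next
    case False
    then show ?thesis
      using Suc by (auto simp flip: op_mult_assoc)
  qed
qed simp

lemma unit_prod_mult_e_diag:
  assumes "\<alpha> \<in> {1..n} \<rightarrow> {1,2}" "\<beta> \<in> {1..n} \<rightarrow> {1,2}" "k \<le> n" "j \<in> {1..k}" "b \<in> {1,2}"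
  shows "op_mult n (unit_prod \<alpha> \<beta> k) (e j b b) = (if b = \<beta> j then unit_prod \<alpha> \<beta> k else 0)"
  using assms
proof (induction k)
  case (Suc k)
  show ?case
  proof (cases "j = Suc k")
    case True
    moreover have "\<alpha> j \<in> {1,2}" "\<beta> j \<in> {1,2}"
      using Suc.prems by auto
    ultimately show ?thesis
      using e_mult_e[of j "\<alpha> j" "\<beta> j" b b] Suc.prems by (auto simp: op_mult_assoc)
  next
    case False
    then have "op_mult n (unit_prod \<alpha> \<beta> (Suc k)) (e j b b) =
        op_mult n (op_mult n (unit_prod \<alpha> \<beta> k) (e j b b)) (e (Suc k) (\<alpha> (Suc k)) (\<beta> (Suc k)))"
      using e_diag_commute[of j "Suc k" b] Suc.prems
      by (simp add: op_commute_def op_mult_assoc)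
    then show ?thesis
      using Suc False by auto
  qed
qed simp

lemma adj_unit_prod_mult_unit_prod:
  assumes "\<alpha> \<in> {1..n} \<rightarrow> {1,2}" "\<beta> \<in> {1..n} \<rightarrow> {1,2}" "k \<le> n"
  shows "op_mult n (op_adj (unit_prod \<alpha> \<beta> k)) (unit_prod \<alpha> \<beta> k) = unit_prod \<beta> \<beta> k"
  using assms
proof (induction k)
  case 0
  then show ?case
    by (simp add: op_mult_id_left is_op_id)
next
  case (Suc k)
  let ?j = "Suc k"
  let ?P = "unit_prod \<alpha> \<beta> k" and ?D = "unit_prod \<beta> \<beta> k"
  have j: "\<alpha> ?j \<in> {1,2}" "\<beta> ?j \<in> {1,2}"
    using Suc.prems by auto
  have "op_mult n (op_adj (unit_prod \<alpha> \<beta> ?j)) (unit_prod \<alpha> \<beta> ?j) =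
      op_mult n (e ?j (\<beta> ?j) (\<alpha> ?j)) (op_mult n (op_mult n (op_adj ?P) ?P) (e ?j (\<alpha> ?j) (\<beta> ?j)))"
    using j by (simp add: op_adj_mult e_unit_adj op_mult_assoc)
  also have "\<dots> = op_mult n (e ?j (\<beta> ?j) (\<alpha> ?j)) (op_mult n ?D (e ?j (\<alpha> ?j) (\<beta> ?j)))"
    using Suc by simp
  also have "\<dots> = op_mult n ?D (op_mult n (e ?j (\<beta> ?j) (\<alpha> ?j)) (e ?j (\<alpha> ?j) (\<beta> ?j)))"
    using unit_prod_diag_commute_e[of k ?j \<beta> "\<beta> ?j" "\<alpha> ?j"] Suc.prems
    by (simp add: op_commute_def flip: op_mult_assoc)
  also have "\<dots> = unit_prod \<beta> \<beta> ?j"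
    using e_mult_e[of ?j "\<beta> ?j" "\<alpha> ?j" "\<alpha> ?j" "\<beta> ?j"] j Suc.prems by simp
  finally show ?case .
qed

lemma tr_e_22_eq_tr_e_11:
  assumes "j \<in> {1..n}" "op_commute n D (e j 2 1)"
  shows "tr n (op_mult n D (e j 2 2)) = tr n (op_mult n D (e j 1 1))"
proof -
  have "e j 2 2 = op_mult n (e j 2 1) (op_mult n (e j 1 1) (e j 1 2))"
    using e_mult_e[OF assms(1)] by simp
  then have "tr n (op_mult n D (e j 2 2)) =
      tr n (op_mult n (e j 2 1) (op_mult n D (op_mult n (e j 1 1) (e j 1 2))))"
    using assms(2) by (simp add: op_commute_def flip: op_mult_assoc)
  also have "\<dots> = tr n (op_mult n (op_mult n D (op_mult n (e j 1 1) (e j 1 2))) (e j 2 1))"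
    by (rule tr_op_mult_commute)
  also have "\<dots> = tr n (op_mult n D (e j 1 1))"
    using e_mult_e[OF assms(1)] by (simp add: op_mult_assoc)
  finally show ?thesis .
qed

lemma tr_unit_prod_diag:
  assumes "\<beta> \<in> {1..n} \<rightarrow> {1,2}" "k \<le> n"
  shows "tr n (unit_prod \<beta> \<beta> k) = 2 ^ (n - k)"
  using assms
proof (induction k)
  case 0
  then show ?case
    by (simp add: tr_id)
next
  case (Suc k)
  let ?j = "Suc k" and ?D = "unit_prod \<beta> \<beta> k"
  have j: "?j \<in> {1..n}" and \<beta>_j: "\<beta> ?j \<in> {1,2}"
    using Suc.prems by auto
  have swap: "tr n (op_mult n ?D (e ?j 2 2)) = tr n (op_mult n ?D (e ?j 1 1))"
    using tr_e_22_eq_tr_e_11[OF j unit_prod_diag_commute_e] Suc.prems by simp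
  have "tr n ?D = tr n (op_mult n ?D (op_id n))"
    using is_op_unit_prod[of k \<beta> \<beta>] Suc.prems by (simp add: op_mult_id_right)
  also have "\<dots> = tr n (op_mult n ?D (e ?j 1 1)) + tr n (op_mult n ?D (e ?j 2 2))"
    by (simp only: e_11_add_e_22[OF j, symmetric] op_mult_add_right tr_add)
  also have "\<dots> = 2 * tr n (unit_prod \<beta> \<beta> ?j)"
    using swap \<beta>_j by auto
  finally have "2 ^ (n - k) = 2 * tr n (unit_prod \<beta> \<beta> ?j)"
    using Suc by simp
  moreover have "n - k = Suc (n - ?j)"
    using Suc.prems by simp
  ultimately show ?case
    by simp
qed

lemma tr_adj_unit_prod_mult_self:
  assumes "\<alpha> \<in> {1..n} \<rightarrow> {1,2}" "\<beta> \<in> {1..n} \<rightarrow> {1,2}"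
  shows "tr n (op_mult n (op_adj (unit_prod \<alpha> \<beta> n)) (unit_prod \<alpha> \<beta> n)) = 1"
  using adj_unit_prod_mult_unit_prod[OF assms order_refl] tr_unit_prod_diag[OF assms(2) order_refl]
  by simp

lemma tr_adj_unit_prod_mult_eq_0_left:
  assumes "\<alpha> \<in> {1..n} \<rightarrow> {1,2}" "\<beta> \<in> {1..n} \<rightarrow> {1,2}"
    and "\<gamma> \<in> {1..n} \<rightarrow> {1,2}" "\<delta> \<in> {1..n} \<rightarrow> {1,2}"
    and "j \<in> {1..n}" "\<alpha> j \<noteq> \<gamma> j"
  shows "tr n (op_mult n (op_adj (unit_prod \<alpha> \<beta> n)) (unit_prod \<gamma> \<delta> n)) = 0"
proof -
  let ?P = "unit_prod \<alpha> \<beta> n" and ?Q = "unit_prod \<gamma> \<delta> n" and ?E = "e j (\<alpha> j) (\<alpha> j)"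
  have a: "\<alpha> j \<in> {1,2}"
    using assms by auto
  then have P: "op_mult n ?E ?P = ?P" and Q: "op_mult n ?E ?Q = 0"
    using e_diag_mult_unit_prod[OF assms(1,2) order_refl assms(5)]
      e_diag_mult_unit_prod[OF assms(3,4) order_refl assms(5)] assms(6) by auto
  have "tr n (op_mult n (op_adj ?P) ?Q) = tr n (op_mult n (op_adj (op_mult n ?E ?P)) ?Q)"
    by (simp only: P)
  also have "\<dots> = tr n (op_mult n (op_adj ?P) (op_mult n ?E ?Q))"
    using a by (simp add: op_adj_mult e_unit_adj op_mult_assoc)
  finally show ?thesis
    by (simp add: Q)
qed

lemma tr_adj_unit_prod_mult_eq_0_right:
  assumes "\<alpha> \<in> {1..n} \<rightarrow> {1,2}" "\<beta> \<in> {1..n} \<rightarrow> {1,2}"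
    and "\<gamma> \<in> {1..n} \<rightarrow> {1,2}" "\<delta> \<in> {1..n} \<rightarrow> {1,2}"
    and "j \<in> {1..n}" "\<beta> j \<noteq> \<delta> j"
  shows "tr n (op_mult n (op_adj (unit_prod \<alpha> \<beta> n)) (unit_prod \<gamma> \<delta> n)) = 0"
proof -
  let ?P = "unit_prod \<alpha> \<beta> n" and ?Q = "unit_prod \<gamma> \<delta> n" and ?E = "e j (\<beta> j) (\<beta> j)"
  have b: "\<beta> j \<in> {1,2}"
    using assms by auto
  then have P: "op_mult n ?P ?E = ?P" and Q: "op_mult n ?Q ?E = 0"
    using unit_prod_mult_e_diag[OF assms(1,2) order_refl assms(5)]
      unit_prod_mult_e_diag[OF assms(3,4) order_refl assms(5)] assms(6) by auto
  have "tr n (op_mult n (op_adj ?P) ?Q) = tr n (op_mult n (op_adj (op_mult n ?P ?E)) ?Q)"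
    by (simp only: P)
  also have "\<dots> = tr n (op_mult n ?E (op_mult n (op_adj ?P) ?Q))"
    using b by (simp add: op_adj_mult e_unit_adj op_mult_assoc)
  also have "\<dots> = tr n (op_mult n (op_adj ?P) (op_mult n ?Q ?E))"
    by (simp add: tr_op_mult_commute[of n ?E] op_mult_assoc)
  finally show ?thesis
    by (simp add: Q)
qed

lemma tr_adj_unit_prod_mult_unit_prod:
  assumes "\<alpha> \<in> {1..n} \<rightarrow>\<^sub>E {1,2}" "\<beta> \<in> {1..n} \<rightarrow>\<^sub>E {1,2}"
    and "\<gamma> \<in> {1..n} \<rightarrow>\<^sub>E {1,2}" "\<delta> \<in> {1..n} \<rightarrow>\<^sub>E {1,2}"
  shows "tr n (op_mult n (op_adj (unit_prod \<alpha> \<beta> n)) (unit_prod \<gamma> \<delta> n)) =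
    (if (\<alpha>, \<beta>) = (\<gamma>, \<delta>) then 1 else 0)"
proof -
  have valid: "\<alpha> \<in> {1..n} \<rightarrow> {1,2}" "\<beta> \<in> {1..n} \<rightarrow> {1,2}"
    "\<gamma> \<in> {1..n} \<rightarrow> {1,2}" "\<delta> \<in> {1..n} \<rightarrow> {1,2}"
    using assms by (auto simp: PiE_iff)
  show ?thesis
  proof (cases "(\<alpha>, \<beta>) = (\<gamma>, \<delta>)")
    case True
    then show ?thesis
      using tr_adj_unit_prod_mult_self[OF valid(1,2)] by simp
  next
    case False
    then obtain j where "j \<in> {1..n}" "\<alpha> j \<noteq> \<gamma> j \<or> \<beta> j \<noteq> \<delta> j"
      using assms by (metis PiE_ext)
    then show ?thesis
      using False tr_adj_unit_prod_mult_eq_0_left[OF valid] tr_adj_unit_prod_mult_eq_0_right[OF valid]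
      by auto
  qed
qed

end

theorem lemma4:
  fixes n :: nat and f :: "nat \<Rightarrow> (nat \<Rightarrow> complex) \<times> (nat \<Rightarrow> complex)"
  defines "c \<equiv> (\<lambda>i. Bf n (f i))"
  defines "P \<equiv> (\<lambda>(\<alpha>, \<beta>). op_prod n (\<lambda>i. e_unit n (c i) (\<alpha> i) (\<beta> i)) n)"
  defines "I \<equiv> ({1..n} \<rightarrow>\<^sub>E {1,2::nat}) \<times> ({1..n} \<rightarrow>\<^sub>E {1,2::nat})"
  assumes car1: "\<forall>i\<in>{1..n}. \<forall>j\<in>{1..n}. anticomm n (c i) (c j) = op_zero"
      and car2: "\<forall>i\<in>{1..n}. \<forall>j\<in>{1..n}.
                   anticomm n (op_adj (c i)) (c j) = (if i = j then op_id n else op_zero)"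
  shows "(\<forall>p\<in>I. \<forall>q\<in>I. tr n (op_mult n (op_adj (P p)) (P q)) = (if p = q then 1 else 0))
       \<and> (\<forall>A. is_op n A \<longrightarrow> (\<exists>a. A = (\<lambda>S T. \<Sum>p\<in>I. a p * P p S T)))"
proof -
  interpret car_family n c
    using car1 car2 by unfold_locales (simp_all add: c_def is_op_Bf)
  have P_eq: "P p = unit_prod (fst p) (snd p) n" for p
    by (simp add: P_def unit_prod_def split_beta)
  have orthonormal: "tr n (op_mult n (op_adj (P p)) (P q)) = (if p = q then 1 else 0)"
    if "p \<in> I" "q \<in> I" for p q
    using that tr_adj_unit_prod_mult_unit_prod[of "fst p" "snd p" "fst q" "snd q"]
    by (auto simp: I_def P_eq mem_Times_iff)
  have "finite I" "card I = card (Pow {1..n} \<times> Pow {1..n})"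
    by (simp_all add: I_def finite_PiE card_cartesian_product card_PiE card_Pow numeral_2_eq_2)
  then have expansion:
    "A = (\<lambda>S T. \<Sum>p\<in>I. tr n (op_mult n (op_adj (P p)) A) * P p S T)" if "is_op n A" for A
    using orthonormal_op_expansion[OF _ _ _ orthonormal that] by (simp add: P_eq is_op_unit_prod)
  have "\<exists>a. A = (\<lambda>S T. \<Sum>p\<in>I. a p * P p S T)" if "is_op n A" for A
    by (rule exI[where x = "\<lambda>p. tr n (op_mult n (op_adj (P p)) A)"]) (rule expansion[OF that])
  with orthonormal show ?thesis
    by blast
qed

end
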